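(* For each $j\ge1$, the random variables $f_jZ_jI_j^{obs}$, $f_jI_j^{cen}$, $b_jI_j^{cen}$ and $I_j^{cen}$ are $\mathcal O_\tau$-measurable.
   Context: Fix a single subject (subject index and parameters suppressed). Event times $0=S_0<S_1<S_2<\cdots$, censoring time $0<C<\infty$, $\tau=\min\{j\ge1:C\le S_j\}$ (assumed finite a.s.). $I_j^{obs}=I\{S_j\le C\}$, $I_j^{cen}=I\{S_{j-1}<C<S_j\}$. For $j\ge1$, $f_j$ (vector-valued), $Z_j$ and $b_j$ (real) are given random variables (in the paper, $f_j=V_j^{-1}\partial\mu_j/\partial\theta$, $Z_j=(Y_j-\mu_j)/V_j$ with $Y_j=S_j-S_{j-1}$, and $b_j$ a weight). For $n\ge1$ let $\mathcal O_n=\sigma\big(f_jZ_jI_n^{cen}\ (j\le n-1),\ f_nI_n^{cen},\ b_nI_n^{cen},\ I_n^{cen}\big)$, and $\mathcal O_\tau=\{A\subseteq\Omega: A\cap\{\tau=n\}\in\mathcal O_n\text{ for all }n\ge1\}$ (a $\sigma$-field). *)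

theory Defs
  imports "HOL-Analysis.Analysis" "HOL-Library.Extended_Nat"
begin

definition Iobs :: "(nat \<Rightarrow> 'a \<Rightarrow> real) \<Rightarrow> ('a \<Rightarrow> real) \<Rightarrow> nat \<Rightarrow> 'a \<Rightarrow> real" where
  "Iobs S C j \<omega> = of_bool (S j \<omega> \<le> C \<omega>)"

definition Icen :: "(nat \<Rightarrow> 'a \<Rightarrow> real) \<Rightarrow> ('a \<Rightarrow> real) \<Rightarrow> nat \<Rightarrow> 'a \<Rightarrow> real" where
  "Icen S C j \<omega> = of_bool (S (j - 1) \<omega> < C \<omega> \<and> C \<omega> < S j \<omega>)"

definition tau :: "(nat \<Rightarrow> 'a \<Rightarrow> real) \<Rightarrow> ('a \<Rightarrow> real) \<Rightarrow> 'a \<Rightarrow> enat" where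
  "tau S C \<omega> = (if \<exists>j\<ge>1. C \<omega> \<le> S j \<omega>
                 then enat (LEAST j. 1 \<le> j \<and> C \<omega> \<le> S j \<omega>) else \<infinity>)"

definition gen_sigma :: "'a set \<Rightarrow> ('a \<Rightarrow> real) set \<Rightarrow> ('a \<Rightarrow> 'v::euclidean_space) set \<Rightarrow> 'a measure" where
  "gen_sigma \<Omega> Rs Vs = sigma \<Omega>
     ({X -` B \<inter> \<Omega> | X B. X \<in> Rs \<and> B \<in> sets (borel :: real measure)} \<union>
      {X -` B \<inter> \<Omega> | X B. X \<in> Vs \<and> B \<in> sets (borel :: 'v measure)})"

definition On :: "'a set \<Rightarrow> (nat \<Rightarrow> 'a \<Rightarrow> real) \<Rightarrow> ('a \<Rightarrow> real) \<Rightarrow> (nat \<Rightarrow> 'a \<Rightarrow> 'v::euclidean_space)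
     \<Rightarrow> (nat \<Rightarrow> 'a \<Rightarrow> real) \<Rightarrow> (nat \<Rightarrow> 'a \<Rightarrow> real) \<Rightarrow> nat \<Rightarrow> 'a measure" where
  "On \<Omega> S C f Z b n = gen_sigma \<Omega>
     {(\<lambda>\<omega>. b n \<omega> * Icen S C n \<omega>), Icen S C n}
     ({(\<lambda>\<omega>. (Z j \<omega> * Icen S C n \<omega>) *\<^sub>R f j \<omega>) | j. 1 \<le> j \<and> j \<le> n - 1} \<union>
      {(\<lambda>\<omega>. Icen S C n \<omega> *\<^sub>R f n \<omega>)})"

definition Otau :: "'a set \<Rightarrow> (nat \<Rightarrow> 'a \<Rightarrow> real) \<Rightarrow> ('a \<Rightarrow> real) \<Rightarrow> (nat \<Rightarrow> 'a \<Rightarrow> 'v::euclidean_space)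
     \<Rightarrow> (nat \<Rightarrow> 'a \<Rightarrow> real) \<Rightarrow> (nat \<Rightarrow> 'a \<Rightarrow> real) \<Rightarrow> 'a set set" where
  "Otau \<Omega> S C f Z b = {A. A \<subseteq> \<Omega> \<and>
     (\<forall>n\<ge>1. A \<inter> {\<omega> \<in> \<Omega>. tau S C \<omega> = enat n} \<in> sets (On \<Omega> S C f Z b n))}"

definition meas_wrt :: "'a set \<Rightarrow> 'a set set \<Rightarrow> ('a \<Rightarrow> 'b::topological_space) \<Rightarrow> bool" where
  "meas_wrt \<Omega> F X \<longleftrightarrow> (\<forall>B \<in> sets borel. X -` B \<inter> \<Omega> \<in> F)"

end

theory Submission
  imports Defs
begin

text \<open>Since the event times increase strictly and avoid \<open>C\<close>, the index \<open>\<tau>\<close> is the unique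
  \<open>n \<ge> 1\<close> with \<open>S (n - 1) < C < S n\<close>. Hence on \<open>{\<tau> = n}\<close> every indicator is constant,
  \<open>I_k^cen = [k = n]\<close> and \<open>I_k^obs = [k < n]\<close>, so each of the four variables agrees on
  \<open>{\<tau> = n}\<close> with a generator of \<open>O_n\<close> or with \<open>0\<close>; and \<open>{\<tau> = n} = {I_n^cen = 1}\<close> is
  itself in \<open>O_n\<close>.\<close>

lemma meas_wrt_gen_sigma_real:
  assumes "X \<in> Rs"
  shows "meas_wrt \<Omega> (sets (gen_sigma \<Omega> Rs (Vs :: ('a \<Rightarrow> 'v::euclidean_space) set))) X"
  unfolding meas_wrt_def gen_sigma_def
  by (subst sets_measure_of) (use assms in blast)+

lemma meas_wrt_gen_sigma_vector:
  assumes "X \<in> Vs"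
  shows "meas_wrt \<Omega> (sets (gen_sigma \<Omega> Rs Vs)) X"
  unfolding meas_wrt_def gen_sigma_def
  by (subst sets_measure_of) (use assms in blast)+

lemma meas_wrt_gen_sigma_const: "meas_wrt \<Omega> (sets (gen_sigma \<Omega> Rs Vs)) (\<lambda>_. c)"
proof -
  have "(\<lambda>_. c) -` B \<inter> \<Omega> \<in> {{}, \<Omega>}" for B :: "'b set" by auto
  then show ?thesis
    unfolding meas_wrt_def gen_sigma_def by auto
qed

lemma meas_wrt_OtauI:
  fixes X :: "'a \<Rightarrow> 'b::topological_space" and Y :: "nat \<Rightarrow> 'a \<Rightarrow> 'b"
  assumes level_sets: "\<And>n. 1 \<le> n \<Longrightarrow> {\<omega> \<in> \<Omega>. tau S C \<omega> = enat n} \<in> sets (On \<Omega> S C f Z b n)"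
    and local_meas: "\<And>n. 1 \<le> n \<Longrightarrow> meas_wrt \<Omega> (sets (On \<Omega> S C f Z b n)) (Y n)"
    and agree: "\<And>n \<omega>. 1 \<le> n \<Longrightarrow> \<omega> \<in> \<Omega> \<Longrightarrow> tau S C \<omega> = enat n \<Longrightarrow> X \<omega> = Y n \<omega>"
  shows "meas_wrt \<Omega> (Otau \<Omega> S C f Z b) X"
  unfolding meas_wrt_def Otau_def
proof (intro ballI CollectI conjI allI impI)
  fix B :: "'b set" and n :: nat
  assume "B \<in> sets borel" "1 \<le> n"
  have "X -` B \<inter> \<Omega> \<inter> {\<omega> \<in> \<Omega>. tau S C \<omega> = enat n}
      = (Y n -` B \<inter> \<Omega>) \<inter> {\<omega> \<in> \<Omega>. tau S C \<omega> = enat n}"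
    using agree[OF \<open>1 \<le> n\<close>] by auto
  also have "\<dots> \<in> sets (On \<Omega> S C f Z b n)"
    using local_meas[OF \<open>1 \<le> n\<close>] level_sets[OF \<open>1 \<le> n\<close>] \<open>B \<in> sets borel\<close>
    unfolding meas_wrt_def by blast
  finally show "X -` B \<inter> \<Omega> \<inter> {\<omega> \<in> \<Omega>. tau S C \<omega> = enat n} \<in> sets (On \<Omega> S C f Z b n)" .
qed auto

lemma meas_wrt_On_Icen: "meas_wrt \<Omega> (sets (On \<Omega> S C f Z b n)) (Icen S C n)"
  unfolding On_def by (rule meas_wrt_gen_sigma_real) simp

lemma meas_wrt_On_weight: "meas_wrt \<Omega> (sets (On \<Omega> S C f Z b n)) (\<lambda>\<omega>. b n \<omega> * Icen S C n \<omega>)"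
  unfolding On_def by (rule meas_wrt_gen_sigma_real) simp

lemma meas_wrt_On_censored: "meas_wrt \<Omega> (sets (On \<Omega> S C f Z b n)) (\<lambda>\<omega>. Icen S C n \<omega> *\<^sub>R f n \<omega>)"
  unfolding On_def by (rule meas_wrt_gen_sigma_vector) simp

lemma meas_wrt_On_observed:
  assumes "1 \<le> k" "k < n"
  shows "meas_wrt \<Omega> (sets (On \<Omega> S C f Z b n)) (\<lambda>\<omega>. (Z k \<omega> * Icen S C n \<omega>) *\<^sub>R f k \<omega>)"
  unfolding On_def by (rule meas_wrt_gen_sigma_vector) (use assms in fastforce)

lemma meas_wrt_On_const: "meas_wrt \<Omega> (sets (On \<Omega> S C f Z b n)) (\<lambda>_. c)"
  unfolding On_def by (rule meas_wrt_gen_sigma_const)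

lemma Icen_eq_of_bool:
  assumes mono: "strict_mono (\<lambda>k. S k \<omega>)" and "S (n - 1) \<omega> < C \<omega>" "C \<omega> < S n \<omega>"
  shows "Icen S C k \<omega> = of_bool (k = n)"
proof -
  have "\<not> (S (k - 1) \<omega> < C \<omega> \<and> C \<omega> < S k \<omega>)" if "k \<noteq> n"
  proof -
    from that consider "k < n" | "n < k" by linarith
    then show ?thesis
    proof cases
      case 1
      then have "S k \<omega> \<le> S (n - 1) \<omega>" using strict_mono_less_eq[OF mono] by simp
      then show ?thesis using assms by simp
    next
      case 2
      then have "S n \<omega> \<le> S (k - 1) \<omega>" using strict_mono_less_eq[OF mono] by simp
      then show ?thesis using assms by simp
    qed
  qed
  then show ?thesis using assms unfolding Icen_def by auto
qed

lemma Iobs_eq_of_bool: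
  assumes mono: "strict_mono (\<lambda>k. S k \<omega>)" and "S (n - 1) \<omega> < C \<omega>" "C \<omega> < S n \<omega>"
  shows "Iobs S C k \<omega> = of_bool (k < n)"
proof (cases "k < n")
  case True
  then have "S k \<omega> \<le> S (n - 1) \<omega>" using strict_mono_less_eq[OF mono] by simp
  then show ?thesis using True assms unfolding Iobs_def by simp
next
  case False
  then have "S n \<omega> \<le> S k \<omega>" using strict_mono_less_eq[OF mono] by simp
  then show ?thesis using False assms unfolding Iobs_def by simp
qed

locale censored_event_times =
  fixes \<Omega> :: "'a set" and S :: "nat \<Rightarrow> 'a \<Rightarrow> real" and C :: "'a \<Rightarrow> real"
  assumes S0: "\<And>\<omega>. \<omega> \<in> \<Omega> \<Longrightarrow> S 0 \<omega> = 0"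
    and Smono: "\<And>\<omega>. \<omega> \<in> \<Omega> \<Longrightarrow> strict_mono (\<lambda>k. S k \<omega>)"
    and Cpos: "\<And>\<omega>. \<omega> \<in> \<Omega> \<Longrightarrow> 0 < C \<omega>"
    and noties: "\<And>\<omega> k. \<omega> \<in> \<Omega> \<Longrightarrow> C \<omega> \<noteq> S k \<omega>"
begin

lemma tau_eq_enat_iff:
  assumes "\<omega> \<in> \<Omega>" "1 \<le> n"
  shows "tau S C \<omega> = enat n \<longleftrightarrow> S (n - 1) \<omega> < C \<omega> \<and> C \<omega> < S n \<omega>"
proof
  assume "tau S C \<omega> = enat n"
  then have ex: "\<exists>j\<ge>1. C \<omega> \<le> S j \<omega>" and least: "(LEAST j. 1 \<le> j \<and> C \<omega> \<le> S j \<omega>) = n"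
    unfolding tau_def by (auto split: if_splits)
  from LeastI_ex[OF ex] have "C \<omega> < S n \<omega>"
    using noties[OF assms(1), of n] unfolding least by auto
  moreover have "S (n - 1) \<omega> < C \<omega>"
  proof (cases "n = 1")
    case False
    then have "\<not> (1 \<le> n - 1 \<and> C \<omega> \<le> S (n - 1) \<omega>)"
      using not_less_Least[of "n - 1" "\<lambda>j. 1 \<le> j \<and> C \<omega> \<le> S j \<omega>"] least \<open>1 \<le> n\<close> by auto
    then show ?thesis using False \<open>1 \<le> n\<close> by auto
  qed (use S0 Cpos assms in simp)
  ultimately show "S (n - 1) \<omega> < C \<omega> \<and> C \<omega> < S n \<omega>" by simp
next
  assume between: "S (n - 1) \<omega> < C \<omega> \<and> C \<omega> < S n \<omega>"
  have "(LEAST j. 1 \<le> j \<and> C \<omega> \<le> S j \<omega>) = n"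
  proof (rule Least_equality)
    fix k assume "1 \<le> k \<and> C \<omega> \<le> S k \<omega>"
    with between have "S (n - 1) \<omega> < S k \<omega>" by linarith
    then show "n \<le> k" using strict_mono_less[OF Smono[OF assms(1)]] by simp
  qed (use between \<open>1 \<le> n\<close> in simp)
  moreover have "\<exists>j\<ge>1. C \<omega> \<le> S j \<omega>" using between \<open>1 \<le> n\<close> by (auto intro: less_imp_le)
  ultimately show "tau S C \<omega> = enat n" unfolding tau_def by simp
qed

lemma Icen_on_tau_level_set:
  assumes "\<omega> \<in> \<Omega>" "1 \<le> n" "tau S C \<omega> = enat n"
  shows "Icen S C k \<omega> = of_bool (k = n)"
proof -
  have "S (n - 1) \<omega> < C \<omega>" "C \<omega> < S n \<omega>"
    using tau_eq_enat_iff assms by auto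
  with Smono[OF assms(1)] show ?thesis by (rule Icen_eq_of_bool)
qed

lemma Iobs_on_tau_level_set:
  assumes "\<omega> \<in> \<Omega>" "1 \<le> n" "tau S C \<omega> = enat n"
  shows "Iobs S C k \<omega> = of_bool (k < n)"
proof -
  have "S (n - 1) \<omega> < C \<omega>" "C \<omega> < S n \<omega>"
    using tau_eq_enat_iff assms by auto
  with Smono[OF assms(1)] show ?thesis by (rule Iobs_eq_of_bool)
qed

lemma tau_level_set_in_On:
  assumes "1 \<le> n"
  shows "{\<omega> \<in> \<Omega>. tau S C \<omega> = enat n} \<in> sets (On \<Omega> S C f Z b n)"
proof -
  have "{\<omega> \<in> \<Omega>. tau S C \<omega> = enat n} = Icen S C n -` {1} \<inter> \<Omega>"
    using tau_eq_enat_iff assms unfolding Icen_def by auto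
  then show ?thesis
    using meas_wrt_On_Icen[unfolded meas_wrt_def] borel_closed[OF closed_singleton] by metis
qed

end

theorem lemma6p1:
  fixes \<Omega> :: "'a set"
    and S :: "nat \<Rightarrow> 'a \<Rightarrow> real" and C :: "'a \<Rightarrow> real"
    and f :: "nat \<Rightarrow> 'a \<Rightarrow> 'v::euclidean_space"
    and Z b :: "nat \<Rightarrow> 'a \<Rightarrow> real"
    and j :: nat
  assumes S0: "\<And>\<omega>. \<omega> \<in> \<Omega> \<Longrightarrow> S 0 \<omega> = 0"
    and Smono: "\<And>\<omega>. \<omega> \<in> \<Omega> \<Longrightarrow> strict_mono (\<lambda>k. S k \<omega>)"
    and Cpos: "\<And>\<omega>. \<omega> \<in> \<Omega> \<Longrightarrow> 0 < C \<omega>"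
    and noties: "\<And>\<omega> k. \<omega> \<in> \<Omega> \<Longrightarrow> C \<omega> \<noteq> S k \<omega>"
    and j: "1 \<le> j"
  shows "meas_wrt \<Omega> (Otau \<Omega> S C f Z b) (\<lambda>\<omega>. (Z j \<omega> * Iobs S C j \<omega>) *\<^sub>R f j \<omega>) \<and>
         meas_wrt \<Omega> (Otau \<Omega> S C f Z b) (\<lambda>\<omega>. Icen S C j \<omega> *\<^sub>R f j \<omega>) \<and>
         meas_wrt \<Omega> (Otau \<Omega> S C f Z b) (\<lambda>\<omega>. b j \<omega> * Icen S C j \<omega>) \<and>
         meas_wrt \<Omega> (Otau \<Omega> S C f Z b) (\<lambda>\<omega>. Icen S C j \<omega>)"
proof -
  interpret censored_event_times \<Omega> S C
    using S0 Smono Cpos noties by unfold_locales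
  note level_sets = tau_level_set_in_On[of _ f Z b]
  note on_level_set = Icen_on_tau_level_set Iobs_on_tau_level_set
  note generators = meas_wrt_On_Icen meas_wrt_On_weight meas_wrt_On_censored
    meas_wrt_On_observed[OF j] meas_wrt_On_const
  show ?thesis
  proof (intro conjI)
    show "meas_wrt \<Omega> (Otau \<Omega> S C f Z b) (\<lambda>\<omega>. (Z j \<omega> * Iobs S C j \<omega>) *\<^sub>R f j \<omega>)"
      by (rule meas_wrt_OtauI[OF level_sets, where Y = "\<lambda>n.
            if j < n then (\<lambda>\<omega>. (Z j \<omega> * Icen S C n \<omega>) *\<^sub>R f j \<omega>) else (\<lambda>_. 0)"])
        (auto simp: on_level_set generators)
    show "meas_wrt \<Omega> (Otau \<Omega> S C f Z b) (\<lambda>\<omega>. Icen S C j \<omega> *\<^sub>R f j \<omega>)"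
      by (rule meas_wrt_OtauI[OF level_sets, where Y = "\<lambda>n.
            if j = n then (\<lambda>\<omega>. Icen S C n \<omega> *\<^sub>R f n \<omega>) else (\<lambda>_. 0)"])
        (auto simp: on_level_set generators)
    show "meas_wrt \<Omega> (Otau \<Omega> S C f Z b) (\<lambda>\<omega>. b j \<omega> * Icen S C j \<omega>)"
      by (rule meas_wrt_OtauI[OF level_sets, where Y = "\<lambda>n.
            if j = n then (\<lambda>\<omega>. b n \<omega> * Icen S C n \<omega>) else (\<lambda>_. 0)"])
        (auto simp: on_level_set generators)
    show "meas_wrt \<Omega> (Otau \<Omega> S C f Z b) (\<lambda>\<omega>. Icen S C j \<omega>)"
      by (rule meas_wrt_OtauI[OF level_sets, where Y = "\<lambda>n _. of_bool (j = n)"])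
        (auto simp: on_level_set generators)
  qed
qed

end
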